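(* Consider the BSSC with parameters $(\alpha,\beta)\in[0,1]^2$, $\alpha+\beta\neq1$, used with feedback and without transmission cost. Let $$\mu=\frac{H(\beta)-H(\alpha)}{1-\alpha-\beta},\qquad\lambda=\frac{1}{1+2^{\mu}},\qquad\nu=\frac{1-(1-\beta)(1+2^{\mu})}{(\alpha+\beta-1)(1+2^{\mu})}.$$ (a) For every $n\ge0$ and every initial state $b_{-1}\in\{0,1\}$, the supremum in $C^{FB,BSSC}_{A^n\to B^n}$ is attained by the time-invariant input distribution $\pi_i(a_i|a^{i-1},b^{i-1})=\pi^{TI}(a_i|b_{i-1})$ for all $i=0,\dots,n$, where $\pi^{TI}(a|b)=\nu$ if $a=b$ and $1-\nu$ if $a\ne b$; the corresponding channel output transition is $\mathbf P(b_i|b^{i-1})=\mathbf P^{TI}(b_i|b_{i-1})$ with $\mathbf P^{TI}(b'|b)=\lambda$ if $b'=b$ and $1-\lambda$ if $b'\ne b$. Moreover $$C^{FB,BSSC}_{A^n\to B^n}=(n+1)\max_{\pi(\cdot|b_{-1})}I(A_0;B_0|B_{-1}=b_{-1})=(n+1)\big[H(\lambda)-\nu H(\alpha)-(1-\nu)H(\beta)\big]\quad\forall b_{-1}\in\{0,1\}.$$ (b) The feedback capacity $C^{FB,BSSC}_{A^\infty\to B^\infty}=\lim_{n\to\infty}\frac1{n+1}C^{FB,BSSC}_{A^n\to B^n}$ equals $H(\lambda)-\nu H(\alpha)-(1-\nu)H(\beta)=\max_{\pi(\cdot|b_{-1})}I(A_0;B_0|B_{-1}=b_{-1})$ for every $b_{-1}$,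 and is independent of the initial state.
   Context: The Binary State Symmetric Channel BSSC$(\alpha,\beta)$ has $\mathbb A=\mathbb B=\{0,1\}$ and time-invariant transition probabilities $\mathbf P(b_i|a_i,b_{i-1})$ given by $\mathbf P(b_i=a_i|a_i,b_{i-1})=\alpha$ if $a_i=b_{i-1}$ and $\mathbf P(b_i=a_i|a_i,b_{i-1})=\beta$ if $a_i\ne b_{i-1}$ (i.e. $\mathbf P(0|0,0)=\alpha$, $\mathbf P(0|0,1)=\beta$, $\mathbf P(0|1,0)=1-\beta$, $\mathbf P(0|1,1)=1-\alpha$, where the conditioning is on $(a_i,b_{i-1})$). $H(x)=-x\log_2x-(1-x)\log_2(1-x)$ is the binary entropy. With the initial state $B_{-1}=b_{-1}$ fixed and known to encoder and decoder, $C^{FB,BSSC}_{A^n\to B^n}=\sup\sum_{i=0}^nI(A^i;B_i|B^{i-1})$, the supremum over all feedback input distributions $\{\mathbf P(a_i|a^{i-1},b^{i-1})\}_{i=0}^n$. $I(A_0;B_0|B_{-1}=b_{-1})$ is evaluated with $A_0\sim\pi(\cdot|b_{-1})$ and $B_0\sim\mathbf P(\cdot|A_0,b_{-1})$. *)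

theory Defs
  imports Complex_Main
begin

text \<open>Binary alphabet {0,1} is represented by bool (False = 0, True = 1).
  Logarithms are base 2, with the convention 0 log 0 = 0.\<close>

definition xlog2 :: "real \<Rightarrow> real" where
  "xlog2 t = (if t = 0 then 0 else t * log 2 t)"

definition Hb :: "real \<Rightarrow> real" where
  "Hb x = - xlog2 x - xlog2 (1 - x)"

definition bssc :: "real \<Rightarrow> real \<Rightarrow> bool \<Rightarrow> bool \<Rightarrow> bool \<Rightarrow> real" where
  "bssc \<alpha> \<beta> a bprev b =
     (if b = a then (if a = bprev then \<alpha> else \<beta>)
      else (if a = bprev then 1 - \<alpha> else 1 - \<beta>))"

text \<open>A feedback input policy: pol i as bs a = P(A_i = a | A^{i-1} = as, B^{i-1} = bs),
  where as, bs have length i.\<close>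
type_synonym policy = "nat \<Rightarrow> bool list \<Rightarrow> bool list \<Rightarrow> bool \<Rightarrow> real"

definition valid_policy :: "policy \<Rightarrow> bool" where
  "valid_policy pol \<longleftrightarrow>
     (\<forall>i as bs. length as = i \<and> length bs = i \<longrightarrow>
        (\<forall>a. 0 \<le> pol i as bs a) \<and> pol i as bs True + pol i as bs False = 1)"

definition prevb :: "bool \<Rightarrow> bool list \<Rightarrow> nat \<Rightarrow> bool" where
  "prevb b0 bs j = (if j = 0 then b0 else bs ! (j - 1))"

text \<open>Joint probability P(A^k = as, B^k = bs | B_{-1} = b0), length as = length bs = k+1.\<close>
definition joint :: "real \<Rightarrow> real \<Rightarrow> policy \<Rightarrow> bool \<Rightarrow> bool list \<Rightarrow> bool list \<Rightarrow> real" where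
  "joint \<alpha> \<beta> pol b0 as bs =
     (\<Prod>j<length as. pol j (take j as) (take j bs) (as ! j) * bssc \<alpha> \<beta> (as ! j) (prevb b0 bs j) (bs ! j))"

definition blists :: "nat \<Rightarrow> bool list set" where
  "blists k = {xs. length xs = k}"

definition pB :: "real \<Rightarrow> real \<Rightarrow> policy \<Rightarrow> bool \<Rightarrow> bool list \<Rightarrow> real" where
  "pB \<alpha> \<beta> pol b0 bs = (\<Sum>as\<in>blists (length bs). joint \<alpha> \<beta> pol b0 as bs)"

text \<open>Marginal P(A^i = as, B^{i-1} = bs'), length as = i+1, length bs' = i.\<close>
definition pAB' :: "real \<Rightarrow> real \<Rightarrow> policy \<Rightarrow> bool \<Rightarrow> bool list \<Rightarrow> bool list \<Rightarrow> real" where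
  "pAB' \<alpha> \<beta> pol b0 as bs' = (\<Sum>b\<in>UNIV. joint \<alpha> \<beta> pol b0 as (bs' @ [b]))"

text \<open>Conditional mutual information I(A^i; B_i | B^{i-1}) given B_{-1} = b0.\<close>
definition cmi :: "real \<Rightarrow> real \<Rightarrow> policy \<Rightarrow> bool \<Rightarrow> nat \<Rightarrow> real" where
  "cmi \<alpha> \<beta> pol b0 i =
     (\<Sum>as\<in>blists (Suc i). \<Sum>bs\<in>blists (Suc i).
        (let p = joint \<alpha> \<beta> pol b0 as bs in
         if p = 0 then 0
         else p * log 2 ((p * pB \<alpha> \<beta> pol b0 (butlast bs)) /
                         (pAB' \<alpha> \<beta> pol b0 as (butlast bs) * pB \<alpha> \<beta> pol b0 bs))))"

definition dirinfo :: "real \<Rightarrow> real \<Rightarrow> policy \<Rightarrow> bool \<Rightarrow> nat \<Rightarrow> real" where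
  "dirinfo \<alpha> \<beta> pol b0 n = (\<Sum>i\<le>n. cmi \<alpha> \<beta> pol b0 i)"

definition CFB :: "real \<Rightarrow> real \<Rightarrow> nat \<Rightarrow> bool \<Rightarrow> real" where
  "CFB \<alpha> \<beta> n b0 = (SUP pol\<in>{pol. valid_policy pol}. dirinfo \<alpha> \<beta> pol b0 n)"

text \<open>I(A_0; B_0 | B_{-1} = b0) with A_0 ~ pi(.|b0), where p = pi(1|b0).\<close>
definition I0 :: "real \<Rightarrow> real \<Rightarrow> bool \<Rightarrow> real \<Rightarrow> real" where
  "I0 \<alpha> \<beta> b0 p = cmi \<alpha> \<beta> (\<lambda>_ _ _ a. if a then p else 1 - p) b0 0"

definition bssc_mu :: "real \<Rightarrow> real \<Rightarrow> real" where
  "bssc_mu \<alpha> \<beta> = (Hb \<beta> - Hb \<alpha>) / (1 - \<alpha> - \<beta>)"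

definition bssc_lambda :: "real \<Rightarrow> real \<Rightarrow> real" where
  "bssc_lambda \<alpha> \<beta> = 1 / (1 + 2 powr bssc_mu \<alpha> \<beta>)"

definition bssc_nu :: "real \<Rightarrow> real \<Rightarrow> real" where
  "bssc_nu \<alpha> \<beta> = (1 - (1 - \<beta>) * (1 + 2 powr bssc_mu \<alpha> \<beta>)) /
                   ((\<alpha> + \<beta> - 1) * (1 + 2 powr bssc_mu \<alpha> \<beta>))"

definition piTI :: "real \<Rightarrow> real \<Rightarrow> bool \<Rightarrow> policy" where
  "piTI \<alpha> \<beta> b0 i as bs a =
     (if a = prevb b0 bs i then bssc_nu \<alpha> \<beta> else 1 - bssc_nu \<alpha> \<beta>)"

definition PTI :: "real \<Rightarrow> real \<Rightarrow> bool \<Rightarrow> bool \<Rightarrow> real" where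
  "PTI \<alpha> \<beta> b b' = (if b' = b then bssc_lambda \<alpha> \<beta> else 1 - bssc_lambda \<alpha> \<beta>)"

definition bssc_cap :: "real \<Rightarrow> real \<Rightarrow> real" where
  "bssc_cap \<alpha> \<beta> = Hb (bssc_lambda \<alpha> \<beta>) - bssc_nu \<alpha> \<beta> * Hb \<alpha> - (1 - bssc_nu \<alpha> \<beta>) * Hb \<beta>"

end

theory Submission
  imports Defs
begin

text \<open>
  For any output transition law R, each term I(A^i; B_i | B^{i-1}) of the directed information is
  at most the average, over the joint law of (A_i, B_{i-1}), of the divergence
  D(W(\<cdot>|a_i, b_{i-1}) \<parallel> R(\<cdot>|b_{i-1})) of the channel row from R; the gap is an averaged
  divergence of the true output law from R, hence nonnegative.  For R = P^TI both channel rows,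
  a_i = b_{i-1} and a_i \<noteq> b_{i-1}, have the same divergence from P^TI, namely the claimed
  capacity C: this is exactly what the choice of \<mu> achieves.  So every term is at most C, whatever
  the policy.  The input law \<pi>^TI mixes the two rows into exactly P^TI (\<lambda> = \<nu>\<alpha> + (1-\<nu>)(1-\<beta>)),
  so under \<pi>^TI the outputs form the Markov chain P^TI, the gap vanishes and every term equals C.
  That \<nu> is a probability follows since D(\<cdot> \<parallel> \<lambda>) takes the value C at both \<alpha> and 1-\<beta>,
  which forces \<lambda> to lie between them.
\<close>

section \<open>Divergence terms\<close>

definition rel_ent :: "real \<Rightarrow> real \<Rightarrow> real" where
  "rel_ent w r = (if w = 0 then 0 else w * log 2 (w / r))"

lemma rel_ent_self: "rel_ent u u = 0"
  by (simp add: rel_ent_def)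

lemma rel_ent_eq_xlog2: "0 < r \<Longrightarrow> rel_ent w r = xlog2 w - w * log 2 r"
  by (simp add: rel_ent_def xlog2_def log_divide algebra_simps)

lemma rel_ent_gt:
  assumes "0 \<le> w" "0 < r" "w \<noteq> r"
  shows "(w - r) / ln 2 < rel_ent w r"
proof (cases "w = 0")
  case True
  then show ?thesis using assms by (simp add: rel_ent_def)
next
  case False
  with assms have "0 < w" by simp
  have "w * (ln r - ln w) < r - w"
    using ln_diff_less[of r w] \<open>0 < w\<close> assms by (simp add: field_simps)
  moreover have "rel_ent w r = w * (ln w - ln r) / ln 2"
    using \<open>0 < w\<close> assms by (simp add: rel_ent_def log_def ln_div)
  ultimately show ?thesis by (simp add: divide_strict_right_mono algebra_simps)
qed

lemma rel_ent_ge: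
  assumes "0 \<le> w" "0 < r"
  shows "(w - r) / ln 2 \<le> rel_ent w r"
  using rel_ent_gt[OF assms] assms by (cases "w = r") (auto simp: rel_ent_def)

text \<open>The summand of cmi at (a^i, b^i), with q = P(a^{i-1}, b^{i-1}) \<pi>_i(a_i | a^{i-1}, b^{i-1}),
  w = W(b_i | a_i, b_{i-1}), P0 = P(b^{i-1}) and P1 = P(b^i).\<close>

lemma cmi_summand_le:
  fixes q w r P0 P1 :: real
  assumes "0 \<le> q" "0 \<le> w" "0 < r" "0 < q * w \<Longrightarrow> 0 < P0" "q * w \<le> P1"
  shows "(if q * w = 0 then 0 else q * w * log 2 (q * w * P0 / (q * P1)))
           \<le> q * rel_ent w r + q * w * (r * P0 / P1 - 1) / ln 2"
proof (cases "q * w = 0")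
  case True
  then show ?thesis by (auto simp: rel_ent_def)
next
  case False
  with assms have "0 < q * w" by (simp add: less_le)
  then have pos: "0 < q" "0 < w" "0 < P0" "0 < P1"
    using assms(1,2,4) less_le_trans[OF _ assms(5)] by (auto simp: zero_less_mult_iff)
  have "log 2 (q * w * P0 / (q * P1)) = log 2 (w / r) + log 2 (r * P0 / P1)"
    using pos assms by (simp add: log_mult_pos[symmetric] field_simps)
  also have "log 2 (r * P0 / P1) \<le> (r * P0 / P1 - 1) / ln 2"
    using ln_le_minus_one[of "r * P0 / P1"] pos assms by (simp add: log_def divide_right_mono)
  finally have "q * w * log 2 (q * w * P0 / (q * P1))
                  \<le> q * w * (log 2 (w / r) + (r * P0 / P1 - 1) / ln 2)"
    using pos by (simp add: mult_left_mono)
  with False pos show ?thesis by (simp add: rel_ent_def algebra_simps)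
qed

lemma cmi_summand_eq:
  fixes q w r P0 :: real
  assumes "0 \<le> q" "0 \<le> w" "0 < r" "0 < q * w \<Longrightarrow> 0 < P0"
  shows "(if q * w = 0 then 0 else q * w * log 2 (q * w * P0 / (q * (P0 * r)))) = q * rel_ent w r"
  using assms by (auto simp: rel_ent_def less_le)

definition bin_kl :: "real \<Rightarrow> real \<Rightarrow> real" where
  "bin_kl v c = rel_ent v c + rel_ent (1 - v) (1 - c)"

lemma bin_kl_pos:
  assumes "0 \<le> v" "v \<le> 1" "0 < c" "c < 1" "v \<noteq> c"
  shows "0 < bin_kl v c"
  using rel_ent_gt[of v c] rel_ent_ge[of "1 - v" "1 - c"] assms
  by (simp add: bin_kl_def diff_divide_distrib)

lemma bin_kl_diff:
  assumes "0 < u" "u < 1" "0 < c" "c < 1"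
  shows "bin_kl v c - bin_kl u c
           = bin_kl v u + (v - u) * ((log 2 u - log 2 (1 - u)) - (log 2 c - log 2 (1 - c)))"
  using assms by (simp add: bin_kl_def rel_ent_eq_xlog2 xlog2_def algebra_simps)

lemma log_odds_mono:
  fixes u c :: real
  assumes "0 < u" "u \<le> c" "c < 1"
  shows "log 2 u - log 2 (1 - u) \<le> log 2 c - log 2 (1 - c)"
proof -
  have "log 2 u \<le> log 2 c" and "log 2 (1 - c) \<le> log 2 (1 - u)"
    using assms by auto
  then show ?thesis by linarith
qed

lemma bin_kl_lt_between:
  assumes "0 \<le> v" "v \<le> 1" "0 < c" "c < 1" and between: "0 < (u - v) * (c - u)"
  shows "bin_kl u c < bin_kl v c"
proof -
  have u: "0 < u" "u < 1"
    using between assms by (auto simp: zero_less_mult_iff)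
  have "v \<noteq> u" using between by auto
  then have "0 < bin_kl v u" using bin_kl_pos[of v u] assms u by auto
  moreover have "0 \<le> (v - u) * ((log 2 u - log 2 (1 - u)) - (log 2 c - log 2 (1 - c)))"
  proof (cases "u < c")
    case True
    with between have "v < u" by (simp add: zero_less_mult_iff)
    with True u assms log_odds_mono[of u c] show ?thesis by (intro mult_nonpos_nonpos) auto
  next
    case False
    with between have "u < v" "c < u" by (auto simp: zero_less_mult_iff)
    with u assms log_odds_mono[of c u] show ?thesis by (intro mult_nonneg_nonneg) auto
  qed
  ultimately show ?thesis using bin_kl_diff[OF u assms(3,4), of v] by linarith
qed

lemma Hb_one_minus: "Hb (1 - x) = Hb x"
  by (simp add: Hb_def)

section \<open>Probabilities under a feedback policy\<close>

lemma sum_UNIV_bool: "(\<Sum>x\<in>UNIV. f x) = f True + (f False :: real)"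
  by (simp add: UNIV_bool)

lemma bssc_sum: "bssc \<alpha> \<beta> a s True + bssc \<alpha> \<beta> a s False = 1"
  by (simp add: bssc_def)

lemma PTI_sum: "PTI \<alpha> \<beta> s True + PTI \<alpha> \<beta> s False = 1"
  by (simp add: PTI_def)

lemma blists_Suc: "blists (Suc k) = (\<lambda>(xs, x). xs @ [x]) ` (blists k \<times> UNIV)"
  by (auto simp: blists_def image_iff length_Suc_conv_rev)

lemma finite_blists: "finite (blists k)"
  by (induction k) (simp_all add: blists_Suc blists_def[of 0])

lemma sum_blists_Suc:
  "(\<Sum>xs\<in>blists (Suc k). f xs) = (\<Sum>xs\<in>blists k. \<Sum>x\<in>UNIV. f (xs @ [x]))"
  unfolding blists_Suc
  by (subst sum.reindex) (auto simp: inj_on_def sum.cartesian_product prod.case_distrib)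

lemma joint_snoc:
  assumes "length as = i" "length bs = i"
  shows "joint \<alpha> \<beta> pol b0 (as @ [x]) (bs @ [y])
           = joint \<alpha> \<beta> pol b0 as bs * pol i as bs x * bssc \<alpha> \<beta> x (prevb b0 bs i) y"
proof -
  have "prevb b0 (bs @ [y]) j = prevb b0 bs j" if "j \<le> i" for j
    using that assms by (auto simp: prevb_def nth_append)
  with assms show ?thesis
    by (simp add: joint_def nth_append cong: prod.cong_simp)
qed

lemma pAB'_snoc:
  assumes "length as = i" "length bs = i"
  shows "pAB' \<alpha> \<beta> pol b0 (as @ [x]) bs = joint \<alpha> \<beta> pol b0 as bs * pol i as bs x"
  using assms bssc_sum[of \<alpha> \<beta> x "prevb b0 bs i"]
  by (simp add: pAB'_def sum_UNIV_bool joint_snoc distrib_left[symmetric])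

lemma pB_snoc:
  "length bs = i \<Longrightarrow>
     pB \<alpha> \<beta> pol b0 (bs @ [y]) = (\<Sum>as\<in>blists i. \<Sum>x\<in>UNIV. joint \<alpha> \<beta> pol b0 (as @ [x]) (bs @ [y]))"
  by (simp add: pB_def sum_blists_Suc)

lemma sum_joint_weighted:
  "(\<Sum>as\<in>blists k. \<Sum>bs\<in>blists k. joint \<alpha> \<beta> pol b0 as bs * g bs)
     = (\<Sum>bs\<in>blists k. pB \<alpha> \<beta> pol b0 bs * g bs)"
  by (subst sum.swap) (simp add: pB_def blists_def sum_distrib_right)

section \<open>The channel parameters\<close>

locale bssc_channel =
  fixes \<alpha> \<beta> :: real
  assumes alpha_ge_0: "0 \<le> \<alpha>" and alpha_le_1: "\<alpha> \<le> 1"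
    and beta_ge_0: "0 \<le> \<beta>" and beta_le_1: "\<beta> \<le> 1"
    and alpha_beta: "\<alpha> + \<beta> \<noteq> 1"
begin

abbreviation "mu \<equiv> bssc_mu \<alpha> \<beta>"
abbreviation "lam \<equiv> bssc_lambda \<alpha> \<beta>"
abbreviation "nu \<equiv> bssc_nu \<alpha> \<beta>"
abbreviation "cap \<equiv> bssc_cap \<alpha> \<beta>"

lemma lambda_gt_0: "0 < lam" and lambda_lt_1: "lam < 1"
  unfolding bssc_lambda_def by (auto simp: add_pos_pos)

lemma lambda_eq_mix: "lam = nu * \<alpha> + (1 - nu) * (1 - \<beta>)"
proof -
  define T where "T = 1 + 2 powr mu"
  have "0 < T" by (simp add: T_def add_pos_pos)
  have "\<alpha> + \<beta> - 1 \<noteq> 0" using alpha_beta by simp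
  then have "nu * (\<alpha> + \<beta> - 1) = (1 - (1 - \<beta>) * T) / T"
    unfolding bssc_nu_def T_def[symmetric] by simp
  also have "\<dots> = lam - (1 - \<beta>)"
    using \<open>0 < T\<close> unfolding bssc_lambda_def T_def[symmetric] by (simp add: field_simps)
  finally show ?thesis by (simp add: algebra_simps)
qed

lemma Hb_diff: "Hb \<beta> - Hb \<alpha> = (1 - \<alpha> - \<beta>) * mu"
  using alpha_beta by (simp add: bssc_mu_def)

lemma bin_kl_lambda: "bin_kl v lam = log 2 (1 + 2 powr mu) - (1 - v) * mu - Hb v"
proof -
  have T: "0 < 1 + 2 powr mu" by (simp add: add_pos_pos)
  have "1 - lam = 2 powr mu / (1 + 2 powr mu)"
    unfolding bssc_lambda_def using T by (simp add: field_simps)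
  then have log_1_lam: "log 2 (1 - lam) = mu - log 2 (1 + 2 powr mu)"
    using T by (simp add: log_divide)
  have log_lam: "log 2 lam = - log 2 (1 + 2 powr mu)"
    unfolding bssc_lambda_def using T by (simp add: log_divide)
  have "bin_kl v lam = xlog2 v - v * log 2 lam + (xlog2 (1 - v) - (1 - v) * log 2 (1 - lam))"
    using lambda_gt_0 lambda_lt_1 by (simp add: bin_kl_def rel_ent_eq_xlog2)
  also have "\<dots> = log 2 (1 + 2 powr mu) - (1 - v) * mu - Hb v"
    unfolding log_lam log_1_lam Hb_def by (simp add: algebra_simps)
  finally show ?thesis .
qed

lemma bin_kl_alpha_lambda: "bin_kl \<alpha> lam = cap"
proof -
  have "Hb lam = log 2 (1 + 2 powr mu) - (1 - lam) * mu"
    using bin_kl_lambda[of lam] by (simp add: bin_kl_def rel_ent_self)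
  then have "cap - bin_kl \<alpha> lam = (lam - \<alpha>) * mu + (1 - nu) * (Hb \<alpha> - Hb \<beta>)"
    unfolding bssc_cap_def bin_kl_lambda by (simp add: algebra_simps)
  also have "\<dots> = (1 - nu) * ((1 - \<alpha> - \<beta>) * mu - (Hb \<beta> - Hb \<alpha>))"
    unfolding lambda_eq_mix by (simp add: algebra_simps)
  also have "\<dots> = 0"
    unfolding Hb_diff by simp
  finally show ?thesis by simp
qed

lemma bin_kl_one_minus_beta_lambda: "bin_kl (1 - \<beta>) lam = cap"
proof -
  have "bin_kl (1 - \<beta>) lam - bin_kl \<alpha> lam = (1 - \<alpha> - \<beta>) * mu - (Hb \<beta> - Hb \<alpha>)"
    unfolding bin_kl_lambda Hb_one_minus by (simp add: algebra_simps)
  then show ?thesis using Hb_diff bin_kl_alpha_lambda by simp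
qed

lemma nu_ge_0: "0 \<le> nu" and nu_le_1: "nu \<le> 1"
proof -
  define d where "d = \<alpha> - (1 - \<beta>)"
  have "0 < d\<^sup>2" using alpha_beta by (simp add: d_def)
  have lam: "lam = (1 - \<beta>) + nu * d" "lam = \<alpha> + (nu - 1) * d"
    unfolding d_def lambda_eq_mix by (simp_all add: algebra_simps)
  show "0 \<le> nu"
  proof (rule ccontr)
    assume "\<not> 0 \<le> nu"
    moreover have "((1 - \<beta>) - \<alpha>) * (lam - (1 - \<beta>)) = - nu * d\<^sup>2"
      unfolding lam(1) by (simp add: d_def power2_eq_square algebra_simps)
    ultimately have "0 < ((1 - \<beta>) - \<alpha>) * (lam - (1 - \<beta>))"
      using \<open>0 < d\<^sup>2\<close> by (simp add: mult_neg_pos)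
    then have "bin_kl (1 - \<beta>) lam < bin_kl \<alpha> lam"
      using bin_kl_lt_between alpha_ge_0 alpha_le_1 lambda_gt_0 lambda_lt_1 by blast
    then show False by (simp add: bin_kl_alpha_lambda bin_kl_one_minus_beta_lambda)
  qed
  show "nu \<le> 1"
  proof (rule ccontr)
    assume "\<not> nu \<le> 1"
    moreover have "(\<alpha> - (1 - \<beta>)) * (lam - \<alpha>) = (nu - 1) * d\<^sup>2"
      unfolding lam(2) by (simp add: d_def power2_eq_square algebra_simps)
    ultimately have "0 < (\<alpha> - (1 - \<beta>)) * (lam - \<alpha>)"
      using \<open>0 < d\<^sup>2\<close> by simp
    then have "bin_kl \<alpha> lam < bin_kl (1 - \<beta>) lam"
      using bin_kl_lt_between beta_ge_0 beta_le_1 lambda_gt_0 lambda_lt_1 by simp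
    then show False by (simp add: bin_kl_alpha_lambda bin_kl_one_minus_beta_lambda)
  qed
qed

lemma bssc_nonneg: "0 \<le> bssc \<alpha> \<beta> a s b"
  using alpha_ge_0 alpha_le_1 beta_ge_0 beta_le_1 by (simp add: bssc_def)

lemma PTI_pos: "0 < PTI \<alpha> \<beta> s b"
  using lambda_gt_0 lambda_lt_1 by (simp add: PTI_def)

lemma rel_ent_bssc_PTI: "(\<Sum>b\<in>UNIV. rel_ent (bssc \<alpha> \<beta> a s b) (PTI \<alpha> \<beta> s b)) = cap"
  using bin_kl_alpha_lambda bin_kl_one_minus_beta_lambda
  by (cases a; cases s) (simp_all add: sum_UNIV_bool bssc_def PTI_def bin_kl_def add.commute)

lemma PTI_mixture: "(\<Sum>a\<in>UNIV. (if a = s then nu else 1 - nu) * bssc \<alpha> \<beta> a s b) = PTI \<alpha> \<beta> s b"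
  using lambda_eq_mix
  by (cases s; cases b) (simp_all add: sum_UNIV_bool bssc_def PTI_def algebra_simps)

lemma valid_policy_piTI: "valid_policy (piTI \<alpha> \<beta> b0)"
  using nu_ge_0 nu_le_1 by (simp add: valid_policy_def piTI_def)

end

locale bssc_policy = bssc_channel +
  fixes pol :: policy and b0 :: bool
  assumes valid: "valid_policy pol"
begin

abbreviation "J \<equiv> joint \<alpha> \<beta> pol b0"
abbreviation "P \<equiv> pB \<alpha> \<beta> pol b0"

lemma pol_nonneg: "length as = i \<Longrightarrow> length bs = i \<Longrightarrow> 0 \<le> pol i as bs x"
  using valid unfolding valid_policy_def by blast

lemma pol_sum: "length as = i \<Longrightarrow> length bs = i \<Longrightarrow> pol i as bs True + pol i as bs False = 1"
  using valid unfolding valid_policy_def by blast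

lemma joint_nonneg: "length as = length bs \<Longrightarrow> 0 \<le> J as bs"
  unfolding joint_def by (intro prod_nonneg ballI mult_nonneg_nonneg bssc_nonneg pol_nonneg) auto

lemma joint_le_pB: "length as = length bs \<Longrightarrow> J as bs \<le> P bs"
  unfolding pB_def using finite_blists
  by (intro member_le_sum) (auto simp: blists_def joint_nonneg)

lemma pB_pos: "length as = length bs \<Longrightarrow> J as bs \<noteq> 0 \<Longrightarrow> 0 < P bs"
  using joint_nonneg joint_le_pB by (metis less_le less_le_trans)

lemma pB_nonneg: "0 \<le> P bs"
  unfolding pB_def by (intro sum_nonneg) (simp add: blists_def joint_nonneg)

lemma joint_total: "(\<Sum>as\<in>blists k. \<Sum>bs\<in>blists k. J as bs) = 1"
proof (induction k)
  case 0
  then show ?case by (simp add: blists_def joint_def)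
next
  case (Suc k)
  have inner: "(\<Sum>x\<in>UNIV. \<Sum>y\<in>UNIV. J (as @ [x]) (bs @ [y])) = J as bs"
    if "as \<in> blists k" "bs \<in> blists k" for as bs
  proof -
    have "(\<Sum>y\<in>UNIV. J (as @ [x]) (bs @ [y])) = J as bs * pol k as bs x" for x
      using that bssc_sum[of \<alpha> \<beta> x "prevb b0 bs k"]
      by (simp add: blists_def joint_snoc sum_UNIV_bool distrib_left[symmetric])
    then show ?thesis
      using that pol_sum[of as k bs] by (simp add: blists_def sum_UNIV_bool distrib_left[symmetric])
  qed
  have "(\<Sum>as\<in>blists (Suc k). \<Sum>bs\<in>blists (Suc k). J as bs)
      = (\<Sum>as\<in>blists k. \<Sum>x\<in>UNIV. \<Sum>bs\<in>blists k. \<Sum>y\<in>UNIV. J (as @ [x]) (bs @ [y]))"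
    by (simp add: sum_blists_Suc)
  also have "\<dots> = (\<Sum>as\<in>blists k. \<Sum>bs\<in>blists k. \<Sum>x\<in>UNIV. \<Sum>y\<in>UNIV. J (as @ [x]) (bs @ [y]))"
    by (rule sum.cong[OF refl], rule sum.swap)
  also have "\<dots> = 1"
    using Suc.IH by (simp add: inner cong: sum.cong_simp)
  finally show ?case .
qed

lemma pB_total: "(\<Sum>bs\<in>blists k. P bs) = 1"
  using sum_joint_weighted[where g = "\<lambda>_. 1"] joint_total by simp

lemma cmi_snoc:
  "cmi \<alpha> \<beta> pol b0 i = (\<Sum>as\<in>blists i. \<Sum>x\<in>UNIV. \<Sum>bs\<in>blists i. \<Sum>y\<in>UNIV.
     (let q = J as bs * pol i as bs x; w = bssc \<alpha> \<beta> x (prevb b0 bs i) y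
      in if q * w = 0 then 0 else q * w * log 2 (q * w * P bs / (q * P (bs @ [y])))))"
  unfolding cmi_def sum_blists_Suc
  by (intro sum.cong refl) (simp add: blists_def joint_snoc pAB'_snoc Let_def)

lemma sum_weighted_rel_ent:
  "(\<Sum>as\<in>blists i. \<Sum>x\<in>UNIV. \<Sum>bs\<in>blists i. \<Sum>y\<in>UNIV.
      J as bs * pol i as bs x * rel_ent (bssc \<alpha> \<beta> x (prevb b0 bs i) y) (PTI \<alpha> \<beta> (prevb b0 bs i) y))
   = cap"
proof -
  have "(\<Sum>as\<in>blists i. \<Sum>x\<in>UNIV. \<Sum>bs\<in>blists i. \<Sum>y\<in>UNIV.
      J as bs * pol i as bs x * rel_ent (bssc \<alpha> \<beta> x (prevb b0 bs i) y) (PTI \<alpha> \<beta> (prevb b0 bs i) y))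
      = (\<Sum>as\<in>blists i. \<Sum>x\<in>UNIV. \<Sum>bs\<in>blists i. J as bs * pol i as bs x * cap)"
    by (simp add: sum_distrib_left[symmetric] rel_ent_bssc_PTI)
  also have "\<dots> = (\<Sum>as\<in>blists i. \<Sum>bs\<in>blists i. \<Sum>x\<in>UNIV. J as bs * pol i as bs x * cap)"
    by (rule sum.cong[OF refl], rule sum.swap)
  also have "\<dots> = (\<Sum>as\<in>blists i. \<Sum>bs\<in>blists i. J as bs) * cap"
    unfolding sum_distrib_right
    by (intro sum.cong refl)
       (simp add: blists_def sum_UNIV_bool pol_sum distrib_left[symmetric] distrib_right[symmetric])
  also have "\<dots> = cap"
    by (simp add: joint_total)
  finally show ?thesis .
qed

text \<open>The error made by replacing the true output law P(b_i | b^{i-1}) by P^TI in the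
  information density, linearised by ln x \<le> x - 1.\<close>

lemma sum_output_correction_nonpos:
  "(\<Sum>as\<in>blists i. \<Sum>x\<in>UNIV. \<Sum>bs\<in>blists i. \<Sum>y\<in>UNIV.
      J (as @ [x]) (bs @ [y]) * (PTI \<alpha> \<beta> (prevb b0 bs i) y * P bs / P (bs @ [y]) - 1)) \<le> 0"
proof -
  define g where
    "g bs' = PTI \<alpha> \<beta> (prevb b0 (butlast bs') i) (last bs') * P (butlast bs') / P bs' - 1" for bs'
  have "(\<Sum>as\<in>blists i. \<Sum>x\<in>UNIV. \<Sum>bs\<in>blists i. \<Sum>y\<in>UNIV.
      J (as @ [x]) (bs @ [y]) * (PTI \<alpha> \<beta> (prevb b0 bs i) y * P bs / P (bs @ [y]) - 1))
      = (\<Sum>as\<in>blists (Suc i). \<Sum>bs\<in>blists (Suc i). J as bs * g bs)"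
    by (simp add: sum_blists_Suc g_def)
  also have "\<dots> = (\<Sum>bs\<in>blists (Suc i). P bs * g bs)"
    by (rule sum_joint_weighted)
  also have "\<dots> = (\<Sum>bs\<in>blists i. \<Sum>y\<in>UNIV.
                     P (bs @ [y]) * (PTI \<alpha> \<beta> (prevb b0 bs i) y * P bs / P (bs @ [y]) - 1))"
    by (simp add: sum_blists_Suc g_def)
  also have "\<dots> \<le> (\<Sum>bs\<in>blists i. \<Sum>y\<in>UNIV. PTI \<alpha> \<beta> (prevb b0 bs i) y * P bs - P (bs @ [y]))"
    using pB_nonneg PTI_pos by (intro sum_mono) (auto simp: right_diff_distrib less_le)
  also have "\<dots> = (\<Sum>bs\<in>blists i. P bs) - (\<Sum>bs\<in>blists (Suc i). P bs)"
    by (simp add: sum_blists_Suc sum_subtractf sum_UNIV_bool distrib_right[symmetric] PTI_sum)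
  also have "\<dots> = 0"
    by (simp add: pB_total)
  finally show ?thesis .
qed

lemma cmi_le_cap: "cmi \<alpha> \<beta> pol b0 i \<le> cap"
proof -
  have "cmi \<alpha> \<beta> pol b0 i \<le> (\<Sum>as\<in>blists i. \<Sum>x\<in>UNIV. \<Sum>bs\<in>blists i. \<Sum>y\<in>UNIV.
      J as bs * pol i as bs x * rel_ent (bssc \<alpha> \<beta> x (prevb b0 bs i) y) (PTI \<alpha> \<beta> (prevb b0 bs i) y)
      + J (as @ [x]) (bs @ [y]) * (PTI \<alpha> \<beta> (prevb b0 bs i) y * P bs / P (bs @ [y]) - 1) / ln 2)"
    unfolding cmi_snoc Let_def
  proof (intro sum_mono)
    fix as x bs y assume "as \<in> blists i" "bs \<in> blists i"
    then have len: "length as = i" "length bs = i" by (simp_all add: blists_def)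
    let ?q = "J as bs * pol i as bs x" and ?w = "bssc \<alpha> \<beta> x (prevb b0 bs i) y"
    have q: "0 \<le> ?q" using len by (simp add: joint_nonneg pol_nonneg)
    have qw: "?q * ?w = J (as @ [x]) (bs @ [y])" using len by (simp add: joint_snoc)
    have "0 < P bs" if "0 < ?q * ?w"
      using that len by (intro pB_pos[of as]) auto
    moreover have "?q * ?w \<le> P (bs @ [y])"
      using qw joint_le_pB len by simp
    ultimately show "(if ?q * ?w = 0 then 0 else ?q * ?w * log 2 (?q * ?w * P bs / (?q * P (bs @ [y]))))
      \<le> ?q * rel_ent ?w (PTI \<alpha> \<beta> (prevb b0 bs i) y)
        + J (as @ [x]) (bs @ [y]) * (PTI \<alpha> \<beta> (prevb b0 bs i) y * P bs / P (bs @ [y]) - 1) / ln 2"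
      unfolding qw[symmetric] by (intro cmi_summand_le q bssc_nonneg PTI_pos)
  qed
  also have "\<dots> = cap + (\<Sum>as\<in>blists i. \<Sum>x\<in>UNIV. \<Sum>bs\<in>blists i. \<Sum>y\<in>UNIV.
      J (as @ [x]) (bs @ [y]) * (PTI \<alpha> \<beta> (prevb b0 bs i) y * P bs / P (bs @ [y]) - 1)) / ln 2"
    by (simp add: sum.distrib sum_divide_distrib sum_weighted_rel_ent)
  also have "\<dots> \<le> cap"
    using sum_output_correction_nonpos by (simp add: divide_nonpos_pos)
  finally show ?thesis .
qed

lemma pB_snoc_markov:
  assumes piTI_step: "\<And>as bs. length bs = i \<Longrightarrow> pol i as bs = piTI \<alpha> \<beta> b0 i as bs"
    and "length bs = i"
  shows "P (bs @ [y]) = P bs * PTI \<alpha> \<beta> (prevb b0 bs i) y"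
proof -
  have "P (bs @ [y]) = (\<Sum>as\<in>blists i. \<Sum>x\<in>UNIV. J (as @ [x]) (bs @ [y]))"
    using assms(2) by (rule pB_snoc)
  also have "\<dots> = (\<Sum>as\<in>blists i. J as bs * PTI \<alpha> \<beta> (prevb b0 bs i) y)"
    using assms PTI_mixture[of "prevb b0 bs i" y]
    by (intro sum.cong refl) (simp add: blists_def joint_snoc piTI_def mult.assoc sum_distrib_left[symmetric])
  also have "\<dots> = P bs * PTI \<alpha> \<beta> (prevb b0 bs i) y"
    using assms(2) by (simp add: pB_def sum_distrib_right)
  finally show ?thesis .
qed

lemma cmi_eq_cap:
  assumes piTI_step: "\<And>as bs. length bs = i \<Longrightarrow> pol i as bs = piTI \<alpha> \<beta> b0 i as bs"
  shows "cmi \<alpha> \<beta> pol b0 i = cap"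
proof -
  have "cmi \<alpha> \<beta> pol b0 i = (\<Sum>as\<in>blists i. \<Sum>x\<in>UNIV. \<Sum>bs\<in>blists i. \<Sum>y\<in>UNIV.
      J as bs * pol i as bs x * rel_ent (bssc \<alpha> \<beta> x (prevb b0 bs i) y) (PTI \<alpha> \<beta> (prevb b0 bs i) y))"
    unfolding cmi_snoc Let_def
  proof (intro sum.cong refl)
    fix as x bs y assume "as \<in> blists i" "bs \<in> blists i"
    then have len: "length as = i" "length bs = i" by (simp_all add: blists_def)
    let ?q = "J as bs * pol i as bs x" and ?w = "bssc \<alpha> \<beta> x (prevb b0 bs i) y"
    have "0 < P bs" if "0 < ?q * ?w"
      using that len by (intro pB_pos[of as]) auto
    then have "(if ?q * ?w = 0 then 0
        else ?q * ?w * log 2 (?q * ?w * P bs / (?q * (P bs * PTI \<alpha> \<beta> (prevb b0 bs i) y))))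
      = ?q * rel_ent ?w (PTI \<alpha> \<beta> (prevb b0 bs i) y)"
      using len by (intro cmi_summand_eq) (simp_all add: joint_nonneg pol_nonneg bssc_nonneg PTI_pos)
    then show "(if ?q * ?w = 0 then 0 else ?q * ?w * log 2 (?q * ?w * P bs / (?q * P (bs @ [y]))))
      = ?q * rel_ent ?w (PTI \<alpha> \<beta> (prevb b0 bs i) y)"
      by (simp only: pB_snoc_markov[OF piTI_step len(2)])
  qed
  also have "\<dots> = cap"
    by (rule sum_weighted_rel_ent)
  finally show ?thesis .
qed

end

section \<open>Feedback capacity\<close>

context bssc_channel
begin

lemma dirinfo_le_cap:
  assumes "valid_policy pol"
  shows "dirinfo \<alpha> \<beta> pol b0 n \<le> real (n + 1) * cap"
proof -
  interpret bssc_policy \<alpha> \<beta> pol b0 using assms by unfold_locales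
  show ?thesis
    unfolding dirinfo_def using sum_bounded_above[of "{..n}" "cmi \<alpha> \<beta> pol b0" cap] cmi_le_cap
    by simp
qed

lemma dirinfo_piTI: "dirinfo \<alpha> \<beta> (piTI \<alpha> \<beta> b0) b0 n = real (n + 1) * cap"
proof -
  interpret bssc_policy \<alpha> \<beta> "piTI \<alpha> \<beta> b0" b0 using valid_policy_piTI by unfold_locales
  show ?thesis by (simp add: dirinfo_def cmi_eq_cap)
qed

lemma CFB_eq: "CFB \<alpha> \<beta> n b0 = real (n + 1) * cap"
  unfolding CFB_def
proof (rule cSup_eq_maximum)
  show "real (n + 1) * cap \<in> (\<lambda>pol. dirinfo \<alpha> \<beta> pol b0 n) ` {pol. valid_policy pol}"
    using dirinfo_piTI valid_policy_piTI by (metis image_eqI mem_Collect_eq)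
next
  fix x assume "x \<in> (\<lambda>pol. dirinfo \<alpha> \<beta> pol b0 n) ` {pol. valid_policy pol}"
  then show "x \<le> real (n + 1) * cap" using dirinfo_le_cap by blast
qed

lemma pB_piTI_markov:
  assumes "length bs = Suc i"
  shows "pB \<alpha> \<beta> (piTI \<alpha> \<beta> b0) b0 bs
           = pB \<alpha> \<beta> (piTI \<alpha> \<beta> b0) b0 (butlast bs) * PTI \<alpha> \<beta> (prevb b0 bs i) (bs ! i)"
proof -
  interpret bssc_policy \<alpha> \<beta> "piTI \<alpha> \<beta> b0" b0 using valid_policy_piTI by unfold_locales
  obtain bs' y where bs: "bs = bs' @ [y]" and len: "length bs' = i"
    using assms by (auto simp: length_Suc_conv_rev)
  have "prevb b0 bs i = prevb b0 bs' i"
    using len by (simp add: bs prevb_def nth_append)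
  then show ?thesis
    using pB_snoc_markov[OF _ len] len by (simp add: bs nth_append)
qed

lemma I0_le_cap:
  assumes "p \<in> {0..1}"
  shows "I0 \<alpha> \<beta> b0 p \<le> cap"
proof -
  interpret bssc_policy \<alpha> \<beta> "\<lambda>_ _ _ a. if a then p else 1 - p" b0
    using assms by unfold_locales (simp add: valid_policy_def)
  show ?thesis unfolding I0_def by (rule cmi_le_cap)
qed

lemma I0_attains_cap: "\<exists>p\<in>{0..1}. I0 \<alpha> \<beta> b0 p = cap"
proof
  let ?p = "piTI \<alpha> \<beta> b0 0 [] [] True"
  show "?p \<in> {0..1}"
    using nu_ge_0 nu_le_1 by (simp add: piTI_def)
  interpret bssc_policy \<alpha> \<beta> "\<lambda>_ _ _ a. if a then ?p else 1 - ?p" b0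
    using nu_ge_0 nu_le_1 by unfold_locales (simp add: valid_policy_def piTI_def)
  show "I0 \<alpha> \<beta> b0 ?p = cap"
    unfolding I0_def by (rule cmi_eq_cap) (auto simp: piTI_def prevb_def)
qed

end

theorem mainTheorem9:
  fixes \<alpha> \<beta> :: real
  assumes "0 \<le> \<alpha>" "\<alpha> \<le> 1" "0 \<le> \<beta>" "\<beta> \<le> 1" "\<alpha> + \<beta> \<noteq> 1"
  shows
    "(\<forall>n b0.
        valid_policy (piTI \<alpha> \<beta> b0)
      \<and> (\<forall>pol. valid_policy pol \<longrightarrow> dirinfo \<alpha> \<beta> pol b0 n \<le> dirinfo \<alpha> \<beta> (piTI \<alpha> \<beta> b0) b0 n)
      \<and> CFB \<alpha> \<beta> n b0 = dirinfo \<alpha> \<beta> (piTI \<alpha> \<beta> b0) b0 n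
      \<and> (\<forall>i\<le>n. \<forall>bs. length bs = Suc i \<longrightarrow>
           pB \<alpha> \<beta> (piTI \<alpha> \<beta> b0) b0 bs =
             pB \<alpha> \<beta> (piTI \<alpha> \<beta> b0) b0 (butlast bs) * PTI \<alpha> \<beta> (prevb b0 bs i) (bs ! i))
      \<and> (\<forall>p\<in>{0..1}. I0 \<alpha> \<beta> b0 p \<le> bssc_cap \<alpha> \<beta>)
      \<and> (\<exists>p\<in>{0..1}. I0 \<alpha> \<beta> b0 p = bssc_cap \<alpha> \<beta>)
      \<and> CFB \<alpha> \<beta> n b0 = real (n + 1) * bssc_cap \<alpha> \<beta>)
   \<and> (\<forall>b0. (\<lambda>n. CFB \<alpha> \<beta> n b0 / real (n + 1)) \<longlonglongrightarrow> bssc_cap \<alpha> \<beta>)"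
proof -
  interpret bssc_channel \<alpha> \<beta> using assms by unfold_locales
  have "CFB \<alpha> \<beta> n b0 / real (n + 1) = cap" for n b0
    by (simp add: CFB_eq del: of_nat_Suc)
  then show ?thesis
    using valid_policy_piTI dirinfo_le_cap pB_piTI_markov I0_le_cap I0_attains_cap
    by (simp add: CFB_eq dirinfo_piTI)
qed

end
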